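(* Let $n\in\mathbb{N}$, $A_1,\dots,A_n\in\mathscr{Q}$ and $\mathcal{A}=\{A_1,\dots,A_n\}$. Then for every $P_1\in\mathrm{Posi}(\mathcal{A})$ there exists $P_2\in\mathrm{Posi}'(A_1,\dots,A_n)$ with $P_2\subseteq P_1$.
   Context: Let $\mathcal{X}$ be a nonempty set and let $\mathscr{V}$ be the real vector space of all functions $u:\mathcal{X}\to\mathbb{R}$, with pointwise operations. Let $\mathscr{Q}$ be the set of all finite subsets of $\mathscr{V}$ (including $\emptyset$). For a positive integer $n$, $\mathbb{R}^{n,+}=\{\boldsymbol\lambda\in\mathbb{R}^n:\lambda_j\ge0\ \forall j,\ \sum_j\lambda_j>0\}$, and for $\boldsymbol\lambda\in\mathbb{R}^n$, $\mathbf u=(u_1,\dots,u_n)\in\mathscr{V}^n$, $\boldsymbol\lambda\mathbf u=\sum_{j=1}^n\lambda_ju_j$. $\mathbb{N}$ denotes the positive integers. For $\mathcal{A}\subseteq\mathscr{Q}$: $\mathrm{Posi}(\mathcal{A})=\{\{\boldsymbol\lambda(\mathbf u)\mathbf u:\mathbf u\in\times_{k=1}^mB_k\}: m\in\mathbb{N},\ B_1,\dots,B_m\in\mathcal A,\ \boldsymbol\lambda:\times_{k=1}^mB_k\to\mathbb{R}^{m,+}\}$. For a finite sequence $A_1,\dots,A_n\in\mathscr{Q}$ ($n\in\mathbb{N}$): $\mathrm{Posi}'(A_1,\dots,A_n)=\{\{\boldsymbol\lambda(\mathbf u)\mathbf u:\mathbf u\in\times_{j=1}^nA_j\}:\ \boldsymbol\lambda:\times_{j=1}^nA_j\to\mathbb{R}^{n,+}\}$.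 *)

theory Defs
  imports "HOL-Analysis.Analysis"
begin

text \<open>A tuple
  u in B_1 x ... x B_m is a list in listset [B_1,...,B_m]. A coefficient map
  lambda assigns to each tuple a coefficient vector nat => real (only indices < m matter).\<close>

definition posi_coeffs :: "nat \<Rightarrow> (nat \<Rightarrow> real) \<Rightarrow> bool" where
  "posi_coeffs m l \<longleftrightarrow> (\<forall>j<m. 0 \<le> l j) \<and> (\<Sum>j<m. l j) > 0"

definition lin_comb :: "(nat \<Rightarrow> real) \<Rightarrow> ('x \<Rightarrow> real) list \<Rightarrow> ('x \<Rightarrow> real)" where
  "lin_comb l u = (\<lambda>x. \<Sum>j<length u. l j * (u ! j) x)"

definition posi_image :: "('x \<Rightarrow> real) set list \<Rightarrow> (('x \<Rightarrow> real) list \<Rightarrow> nat \<Rightarrow> real) \<Rightarrow> ('x \<Rightarrow> real) set" where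
  "posi_image Bs lam = {lin_comb (lam u) u | u. u \<in> listset Bs}"

definition Posi :: "('x \<Rightarrow> real) set set \<Rightarrow> ('x \<Rightarrow> real) set set" where
  "Posi \<A> = {posi_image Bs lam | Bs lam. Bs \<noteq> [] \<and> set Bs \<subseteq> \<A>
      \<and> (\<forall>u\<in>listset Bs. posi_coeffs (length Bs) (lam u))}"

definition Posi' :: "('x \<Rightarrow> real) set list \<Rightarrow> ('x \<Rightarrow> real) set set" where
  "Posi' As = {posi_image As lam | lam. \<forall>u\<in>listset As. posi_coeffs (length As) (lam u)}"

end

theory Submission
  imports Defs
begin

text \<open>Every factor B_k of a product in Posi(\<A>) is some A_(idx k). A tuple u of
  A_1 \<times> \<dots> \<times> A_n is pulled back to the tuple (u_(idx k))_k of B_1 \<times> \<dots> \<times> B_m, and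
  its coefficient vector \<lambda> is pushed forward along idx by summing over fibres.
  The pushed vector is still nonnegative with the same positive total, and it
  produces the same linear combination, so every element of the new Posi' set
  already lies in the given Posi set.\<close>

lemma in_listset_conv_nth:
  "u \<in> listset As \<longleftrightarrow> length u = length As \<and> (\<forall>i<length As. u ! i \<in> As ! i)"
proof (induction As arbitrary: u)
  case Nil
  then show ?case by auto
next
  case (Cons A As)
  show ?case
  proof (cases u)
    case Nil
    then show ?thesis by (auto simp: set_Cons_def)
  next
    case (Cons a w)
    have "u \<in> listset (A # As) \<longleftrightarrow> a \<in> A \<and> w \<in> listset As"
      using Cons by (auto simp: set_Cons_def)
    also have "\<dots> \<longleftrightarrow> length u = length (A # As) \<and> (\<forall>i<length (A # As). u ! i \<in> (A # As) ! i)"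
      using Cons Cons.IH by (auto simp: less_Suc_eq_0_disj)
    finally show ?thesis .
  qed
qed

lemma subset_set_index_map:
  assumes "set Bs \<subseteq> set As"
  obtains idx where "\<And>k. k < length Bs \<Longrightarrow> idx k < length As \<and> As ! idx k = Bs ! k"
proof -
  have "\<forall>k<length Bs. \<exists>j. j < length As \<and> As ! j = Bs ! k"
    using assms by (metis in_set_conv_nth nth_mem subsetD)
  then show ?thesis using that by metis
qed

definition reindex :: "(nat \<Rightarrow> nat) \<Rightarrow> nat \<Rightarrow> 'a list \<Rightarrow> 'a list" where
  "reindex idx m u = map (\<lambda>k. u ! idx k) [0..<m]"

definition push_coeffs :: "(nat \<Rightarrow> nat) \<Rightarrow> nat \<Rightarrow> (nat \<Rightarrow> real) \<Rightarrow> nat \<Rightarrow> real" where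
  "push_coeffs idx m l j = (\<Sum>k | k < m \<and> idx k = j. l k)"

lemma reindex_in_listset:
  assumes "\<And>k. k < length Bs \<Longrightarrow> idx k < length As \<and> As ! idx k = Bs ! k"
    and "u \<in> listset As"
  shows "reindex idx (length Bs) u \<in> listset Bs"
  using assms by (auto simp: in_listset_conv_nth reindex_def)

lemma sum_push_coeffs:
  assumes "\<And>k. k < m \<Longrightarrow> idx k < n"
  shows "(\<Sum>j<n. push_coeffs idx m l j * f j) = (\<Sum>k<m. l k * f (idx k))"
proof -
  have "(\<Sum>j<n. push_coeffs idx m l j * f j)
      = (\<Sum>j<n. \<Sum>k | k \<in> {..<m} \<and> idx k = j. l k * f (idx k))"
    unfolding push_coeffs_def sum_distrib_right by (intro sum.cong) auto
  also have "\<dots> = (\<Sum>k<m. l k * f (idx k))"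
    by (rule sum.group) (use assms in auto)
  finally show ?thesis .
qed

lemma posi_coeffs_push_coeffs:
  assumes "\<And>k. k < m \<Longrightarrow> idx k < n" and "posi_coeffs m l"
  shows "posi_coeffs n (push_coeffs idx m l)"
proof -
  have "(\<Sum>j<n. push_coeffs idx m l j) = (\<Sum>k<m. l k)"
    using sum_push_coeffs[OF assms(1), where l = l and f = "\<lambda>_. 1"] by simp
  with assms(2) show ?thesis
    unfolding posi_coeffs_def push_coeffs_def by (auto intro: sum_nonneg)
qed

lemma lin_comb_push_coeffs:
  assumes "\<And>k. k < m \<Longrightarrow> idx k < length u"
  shows "lin_comb (push_coeffs idx m l) u = lin_comb l (reindex idx m u)"
  unfolding lin_comb_def reindex_def
  using sum_push_coeffs[OF assms, where l = l and f = "\<lambda>j. (u ! j) _"] by simp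

theorem mainTheorem18:
  fixes As :: "('x \<Rightarrow> real) set list" and P1 :: "('x \<Rightarrow> real) set"
  assumes "As \<noteq> []"
    and "\<forall>A\<in>set As. finite A"
    and "P1 \<in> Posi (set As)"
  shows "\<exists>P2\<in>Posi' As. P2 \<subseteq> P1"
proof -
  obtain Bs lam where P1: "P1 = posi_image Bs lam" and "set Bs \<subseteq> set As"
    and pos: "\<forall>u\<in>listset Bs. posi_coeffs (length Bs) (lam u)"
    using assms(3) unfolding Posi_def by blast
  then obtain idx where idx: "\<And>k. k < length Bs \<Longrightarrow> idx k < length As \<and> As ! idx k = Bs ! k"
    using subset_set_index_map by blast
  define mu where "mu u = push_coeffs idx (length Bs) (lam (reindex idx (length Bs) u))" for u
  have "posi_image As mu \<in> Posi' As"
    using posi_coeffs_push_coeffs idx pos reindex_in_listset[OF idx]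
    unfolding Posi'_def mu_def by blast
  moreover have "posi_image As mu \<subseteq> P1"
  proof
    fix p assume "p \<in> posi_image As mu"
    then obtain u where u: "u \<in> listset As" and "p = lin_comb (mu u) u"
      unfolding posi_image_def by blast
    moreover have "length u = length As"
      using u by (simp add: in_listset_conv_nth)
    ultimately have "p = lin_comb (lam (reindex idx (length Bs) u)) (reindex idx (length Bs) u)"
      using lin_comb_push_coeffs idx unfolding mu_def by metis
    then show "p \<in> P1"
      using reindex_in_listset[OF idx u] unfolding P1 posi_image_def by blast
  qed
  ultimately show ?thesis by blast
qed

end
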